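(* Suppose Assumptions A1 and A2 hold. Let $\{w_k\}$ be generated from an arbitrary $w_0\in\mathbb{R}^d$ by the subsampled Newton iteration $$w_{k+1}=w_k-\alpha_k\,\nabla^2F_{S_k}(w_k)^{-1}\nabla F_{X_k}(w_k),$$ where $|X_k|=\eta^k$ for some fixed $\eta>1$, $|S_k|=\beta\ge 1$ is a fixed integer, and the steplength is constant, $\alpha_k=\alpha=\mu_\beta/L$. Then for all $k\ge 0$, $$\mathbb{E}[F(w_k)-F(w^* )]\le C\hat\rho^{\,k},$$ where $$C=\max\left\{F(w_0)-F(w^* ),\ \frac{v^2L_\beta}{\mu\mu_\beta}\right\},\qquad \hat\rho=\max\left\{1-\frac{\mu\mu_\beta}{2LL_\beta},\ \frac1\eta\right\}.$$
   Context: Setting: $P$ is a probability distribution on input–output pairs $(x,y)$, $f(w;x,y)$ is a smooth loss, and $F(w)=\int f(w;x,y)\,dP(x,y)$ for $w\in\mathbb{R}^d$ (expected risk). Sample points $(x^i,y^i)$, $i=1,2,\dots$, are drawn independently from $P$, and $F_i(w)=f(w;x^i,y^i)$, so that $\mathbb{E}[\nabla F_i(w)]=\nabla F(w)$ and $\mathbb{E}[\nabla^2F_i(w)]=\nabla^2F(w)$. For a finite index set $S$, $\nabla F_S(w)=\frac1{|S|}\sum_{i\in S}\nabla F_i(w)$ and $\nabla^2F_S(w)=\frac1{|S|}\sum_{i\in S}\nabla^2F_i(w)$. At each iteration the gradient sample $X_k$ and Hessian sample $S_k$ are index sets of independently drawn sample points, chosen independently of each other and of the past iterates, so that $\mathbb{E}[\nabla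 F_{X_k}(w_k)\mid w_k]=\nabla F(w_k)$. $w^*$ denotes the unique minimizer of $F$; $\|\cdot\|$ is the Euclidean norm or induced matrix norm; $A\preceq B$ means $B-A$ is symmetric positive semidefinite. Assumption A1: $F$ is twice continuously differentiable; for every positive integer $\beta$ there are constants $0<\mu_\beta\le L_\beta$ such that for every index set $S$ with $|S|=\beta$, $\mu_\beta I\preceq\nabla^2F_S(w)\preceq L_\beta I$ for all $w$; there are constants $0<\bar\mu\le\mu_\beta$ and $L_\beta\le\bar L<\infty$ for all $\beta$; and $\mu I\preceq\nabla^2F(w)\preceq LI$ for all $w$, with $0<\mu\le L<\infty$. Assumption A2: there is $v$ with $\operatorname{tr}(\operatorname{Cov}(\nabla F_i(w)))\le v^2$ for all $w$. *)

theory Defs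
  imports "HOL-Probability.Probability"
begin

definition loewner_le :: "real^'n^'n \<Rightarrow> real^'n^'n \<Rightarrow> bool" where
  "loewner_le A B \<longleftrightarrow> transpose (B - A) = B - A \<and> (\<forall>u. 0 \<le> u \<bullet> ((B - A) *v u))"

definition tr_cov :: "'z measure \<Rightarrow> ('z \<Rightarrow> real^'n) \<Rightarrow> real" where
  "tr_cov P G = (\<Sum>i\<in>UNIV. \<integral>z. (G z $ i - (\<integral>z'. G z' $ i \<partial>P))^2 \<partial>P)"

text \<open>Subsampled Newton iteration. Sample points are Z (True,k,j) (j < nX k) for the
  gradient sample X_k and Z (False,k,j) (j < b) for the Hessian sample S_k.\<close>
fun sn_iter :: "('z \<Rightarrow> real^'n \<Rightarrow> real^'n) \<Rightarrow> ('z \<Rightarrow> real^'n \<Rightarrow> real^'n^'n)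
    \<Rightarrow> (bool \<times> nat \<times> nat \<Rightarrow> 'w \<Rightarrow> 'z) \<Rightarrow> (nat \<Rightarrow> nat) \<Rightarrow> nat \<Rightarrow> real \<Rightarrow> real^'n
    \<Rightarrow> nat \<Rightarrow> 'w \<Rightarrow> real^'n" where
  "sn_iter g H Z nX b \<alpha> w0 0 \<omega> = w0"
| "sn_iter g H Z nX b \<alpha> w0 (Suc k) \<omega> =
     (let wk = sn_iter g H Z nX b \<alpha> w0 k \<omega>;
          gX = (1 / real (nX k)) *\<^sub>R (\<Sum>j<nX k. g (Z (True, k, j) \<omega>) wk);
          HS = (1 / real b) *\<^sub>R (\<Sum>j<b. H (Z (False, k, j) \<omega>) wk)
      in wk - \<alpha> *\<^sub>R (matrix_inv HS *v gX))"

end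

theory Submission
  imports Defs
begin

text \<open>Deterministically, a step of length \<open>\<mu>\<^sub>\<beta>/L\<close> along the inverse sample Hessian applied
  to the sample gradient contracts the optimality gap by \<open>1 - \<mu>\<mu>\<^sub>\<beta>/(L L\<^sub>\<beta>)\<close>, up to an
  additive error \<open>\<parallel>\<nabla>F\<^sub>X(w) - \<nabla>F(w)\<parallel>\<^sup>2/(2L)\<close>: this combines the descent lemma, the
  Polyak--Lojasiewicz inequality and the spectral bounds on the sample Hessian.
  The gradient sample of step \<open>k\<close> is independent of \<open>w\<^sub>k\<close>, so conditioning on the past
  bounds the expected error by \<open>v\<^sup>2/|X\<^sub>k|\<close>.  Since \<open>|X\<^sub>k| \<ge> \<eta>\<^sup>k\<close>, the expected gap
  \<open>E\<^sub>k\<close> satisfies \<open>E\<^sub>k\<^sub>+\<^sub>1 \<le> (1 - c) E\<^sub>k + v\<^sup>2/(2L) \<eta>\<^sup>-\<^sup>k\<close>, and induction gives the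
  geometric bound.\<close>

section \<open>Quadratic bounds from Hessian bounds\<close>

lemma has_real_derivative_along_line:
  fixes F :: "real^'n \<Rightarrow> real"
  assumes "\<And>x. (F has_derivative (\<lambda>h. GF x \<bullet> h)) (at x)"
  shows "((\<lambda>t. F (w + t *\<^sub>R d)) has_real_derivative (GF (w + t *\<^sub>R d) \<bullet> d)) (at t)"
proof -
  have "((\<lambda>t. w + t *\<^sub>R d) has_derivative (\<lambda>h. h *\<^sub>R d)) (at t)"
    by (auto intro!: derivative_eq_intros)
  from has_derivative_compose[OF this assms]
  show ?thesis by (simp add: has_field_derivative_def mult_commute_abs)
qed

lemma has_real_derivative_directional_along_line:
  fixes GF :: "real^'n \<Rightarrow> real^'n"
  assumes "\<And>x. (GF has_derivative (\<lambda>h. HF x *v h)) (at x)"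
  shows "((\<lambda>t. GF (w + t *\<^sub>R d) \<bullet> d) has_real_derivative (d \<bullet> (HF (w + t *\<^sub>R d) *v d))) (at t)"
proof -
  have "((\<lambda>t. w + t *\<^sub>R d) has_derivative (\<lambda>h. h *\<^sub>R d)) (at t)"
    by (auto intro!: derivative_eq_intros)
  from has_derivative_compose[OF this assms]
  have "((\<lambda>t. GF (w + t *\<^sub>R d) \<bullet> d) has_derivative (\<lambda>h. (HF (w + t *\<^sub>R d) *v (h *\<^sub>R d)) \<bullet> d)) (at t)"
    by (auto intro!: derivative_eq_intros)
  then show ?thesis
    by (simp add: has_field_derivative_def matrix_vector_mult_scaleR inner_commute mult_commute_abs)
qed

lemma quadratic_upper_bound_of_hessian_le:
  fixes F :: "real^'n \<Rightarrow> real"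
  assumes F': "\<And>x. (F has_derivative (\<lambda>h. GF x \<bullet> h)) (at x)"
    and F'': "\<And>x. (GF has_derivative (\<lambda>h. HF x *v h)) (at x)"
    and hessian_le: "\<And>x u. u \<bullet> (HF x *v u) \<le> c * (u \<bullet> u)"
  shows "F (w + d) \<le> F w + GF w \<bullet> d + c/2 * (d \<bullet> d)"
proof -
  define \<psi> where "\<psi> t = GF (w + t *\<^sub>R d) \<bullet> d - GF w \<bullet> d - c * t * (d \<bullet> d)" for t
  define \<phi> where "\<phi> t = F (w + t *\<^sub>R d) - F w - t * (GF w \<bullet> d) - c/2 * t^2 * (d \<bullet> d)" for t
  have \<psi>': "DERIV \<psi> t :> d \<bullet> (HF (w + t *\<^sub>R d) *v d) - c * (d \<bullet> d)" for t
    unfolding \<psi>_def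
    by (auto intro!: derivative_eq_intros has_real_derivative_directional_along_line[OF F''])
  have \<psi>_nonpos: "\<psi> t \<le> 0" if "0 \<le> t" for t
  proof -
    have "\<psi> t \<le> \<psi> 0"
      by (rule DERIV_nonpos_imp_nonincreasing[OF that])
        (use \<psi>' hessian_le in \<open>fastforce simp: diff_le_0_iff_le\<close>)
    then show ?thesis by (simp add: \<psi>_def)
  qed
  have \<phi>': "DERIV \<phi> t :> \<psi> t" for t
    unfolding \<phi>_def \<psi>_def
    by (auto intro!: derivative_eq_intros has_real_derivative_along_line[OF F'] simp: algebra_simps)
  have "\<phi> 1 \<le> \<phi> 0"
    by (rule DERIV_nonpos_imp_nonincreasing) (use \<phi>' \<psi>_nonpos in auto)
  then show ?thesis by (simp add: \<phi>_def)
qed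

lemma quadratic_lower_bound_of_hessian_ge:
  fixes F :: "real^'n \<Rightarrow> real"
  assumes F': "\<And>x. (F has_derivative (\<lambda>h. GF x \<bullet> h)) (at x)"
    and F'': "\<And>x. (GF has_derivative (\<lambda>h. HF x *v h)) (at x)"
    and hessian_ge: "\<And>x u. m * (u \<bullet> u) \<le> u \<bullet> (HF x *v u)"
  shows "F w + GF w \<bullet> d + m/2 * (d \<bullet> d) \<le> F (w + d)"
proof -
  have neg: "(- A) *v u = - (A *v u)" for A :: "real^'n^'n" and u
    by (simp add: vec_eq_iff matrix_vector_mult_def sum_negf)
  have "- F (w + d) \<le> - F w + (- GF w) \<bullet> d + (- m)/2 * (d \<bullet> d)"
  proof (rule quadratic_upper_bound_of_hessian_le)
    show "((\<lambda>x. - F x) has_derivative (\<lambda>h. (- GF x) \<bullet> h)) (at x)" for x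
      using has_derivative_minus[OF F'[of x]] by simp
    show "((\<lambda>x. - GF x) has_derivative (\<lambda>h. (- HF x) *v h)) (at x)" for x
      using has_derivative_minus[OF F''[of x]] by (simp add: neg)
    show "u \<bullet> ((- HF x) *v u) \<le> (- m) * (u \<bullet> u)" for x u
      using hessian_ge[of u x] by (simp add: neg)
  qed
  then show ?thesis by simp
qed

lemma polyak_lojasiewicz_of_hessian_ge:
  fixes F :: "real^'n \<Rightarrow> real"
  assumes F': "\<And>x. (F has_derivative (\<lambda>h. GF x \<bullet> h)) (at x)"
    and F'': "\<And>x. (GF has_derivative (\<lambda>h. HF x *v h)) (at x)"
    and hessian_ge: "\<And>x u. m * (u \<bullet> u) \<le> u \<bullet> (HF x *v u)"
    and m: "0 < m"
    and minimizer: "\<And>x. F wmin \<le> F x"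
  shows "2 * m * (F w - F wmin) \<le> GF w \<bullet> GF w"
proof -
  define d where "d = wmin - w"
  have "F w + GF w \<bullet> d + m/2 * (d \<bullet> d) \<le> F wmin"
    using quadratic_lower_bound_of_hessian_ge[OF F' F'' hessian_ge, of w d] by (simp add: d_def)
  then have "2 * m * (F w + GF w \<bullet> d + m/2 * (d \<bullet> d)) \<le> 2 * m * F wmin"
    using m by (intro mult_left_mono) auto
  then have "2 * m * (F w - F wmin) \<le> - (2 * m * (GF w \<bullet> d) + m * m * (d \<bullet> d))"
    by (simp add: algebra_simps)
  also have "\<dots> \<le> GF w \<bullet> GF w"
    using inner_ge_zero[of "GF w + m *\<^sub>R d"] by (simp add: algebra_simps inner_commute)
  finally show ?thesis .
qed

section \<open>Quadratic forms of positive definite matrices\<close>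

lemma loewner_le_scaleR_mat_1_leftD:
  fixes A :: "real^'n^'n"
  assumes "loewner_le (m *\<^sub>R mat 1) A"
  shows "transpose A = A" "m * (u \<bullet> u) \<le> u \<bullet> (A *v u)"
proof -
  from assms have t: "transpose (A - m *\<^sub>R mat 1) = A - m *\<^sub>R mat 1"
    and p: "0 \<le> u \<bullet> ((A - m *\<^sub>R mat 1) *v u)"
    by (auto simp: loewner_le_def)
  have "transpose (A - m *\<^sub>R mat 1) = transpose A - m *\<^sub>R mat 1"
    by (simp add: vec_eq_iff transpose_def mat_def)
  with t show "transpose A = A" by simp
  from p show "m * (u \<bullet> u) \<le> u \<bullet> (A *v u)"
    by (simp add: matrix_vector_mult_diff_rdistrib inner_diff_right flip: scaleR_matrix_vector_assoc)
qed

lemma loewner_le_scaleR_mat_1_rightD: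
  fixes A :: "real^'n^'n"
  assumes "loewner_le A (m *\<^sub>R mat 1)"
  shows "u \<bullet> (A *v u) \<le> m * (u \<bullet> u)"
  using assms
  by (simp add: loewner_le_def matrix_vector_mult_diff_rdistrib inner_diff_right
      flip: scaleR_matrix_vector_assoc)

lemma symmetric_matrix_inner_swap:
  fixes A :: "real^'n^'n"
  assumes "transpose A = A"
  shows "x \<bullet> (A *v y) = (A *v x) \<bullet> y"
  by (metis assms dot_lmul_matrix transpose_matrix_vector)

lemma symmetric_quadratic_form_add_scaleR:
  fixes A :: "real^'n^'n"
  assumes "transpose A = A"
  shows "(x + t *\<^sub>R y) \<bullet> (A *v (x + t *\<^sub>R y))
    = x \<bullet> (A *v x) + 2 * t * (x \<bullet> (A *v y)) + t^2 * (y \<bullet> (A *v y))"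
proof -
  have "y \<bullet> (A *v x) = x \<bullet> (A *v y)"
    using symmetric_matrix_inner_swap[OF assms, of y x] by (simp add: inner_commute)
  then show ?thesis
    by (simp add: matrix_vector_right_distrib matrix_vector_mult_scaleR inner_add_left
        inner_add_right power2_eq_square algebra_simps del: scaleR_matrix_vector_assoc)
qed

lemma quadratic_form_cauchy_schwarz:
  fixes A :: "real^'n^'n"
  assumes sym: "transpose A = A" and ge: "\<And>u. m * (u \<bullet> u) \<le> u \<bullet> (A *v u)" and m: "0 < m"
  shows "(x \<bullet> (A *v y))^2 \<le> (x \<bullet> (A *v x)) * (y \<bullet> (A *v y))"
proof (cases "y = 0")
  case True
  then show ?thesis by simp
next
  case False
  then have qy: "0 < y \<bullet> (A *v y)"
    using ge[of y] m by (smt (verit) inner_gt_zero_iff mult_pos_pos)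
  define t where "t = - (x \<bullet> (A *v y)) / (y \<bullet> (A *v y))"
  have "0 \<le> (x + t *\<^sub>R y) \<bullet> (A *v (x + t *\<^sub>R y))"
    using ge[of "x + t *\<^sub>R y"] m by (smt (verit) inner_ge_zero mult_nonneg_nonneg)
  also have "\<dots> = x \<bullet> (A *v x) + 2 * t * (x \<bullet> (A *v y)) + t^2 * (y \<bullet> (A *v y))"
    by (rule symmetric_quadratic_form_add_scaleR[OF sym])
  also have "\<dots> = x \<bullet> (A *v x) - (x \<bullet> (A *v y))^2 / (y \<bullet> (A *v y))"
    using qy by (simp add: t_def power2_eq_square field_simps)
  finally show ?thesis
    using qy by (simp add: divide_le_eq mult.commute)
qed

lemma inner_le_quadratic_form_of_solution:
  fixes A :: "real^'n^'n"
  assumes sym: "transpose A = A" and ge: "\<And>u. m * (u \<bullet> u) \<le> u \<bullet> (A *v u)" and m: "0 < m"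
    and le: "\<And>u. u \<bullet> (A *v u) \<le> M * (u \<bullet> u)" and M: "0 < M"
    and solution: "A *v p = G"
  shows "G \<bullet> G / M \<le> p \<bullet> (A *v p)"
proof -
  let ?s = "G \<bullet> G"
  have p_nonneg: "0 \<le> p \<bullet> (A *v p)"
    using ge[of p] m by (smt (verit) inner_ge_zero mult_nonneg_nonneg)
  have "?s * ?s \<le> (G \<bullet> (A *v G)) * (p \<bullet> (A *v p))"
    using quadratic_form_cauchy_schwarz[OF sym ge m, of G p] solution by (simp add: power2_eq_square)
  also have "\<dots> \<le> (M * ?s) * (p \<bullet> (A *v p))"
    by (intro mult_right_mono le p_nonneg)
  finally have "?s \<le> M * (p \<bullet> (A *v p))"
    by (cases "?s = 0") (use p_nonneg M in \<open>auto simp: algebra_simps\<close>)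
  then show ?thesis using M by (simp add: divide_le_eq mult.commute)
qed

lemma quadratic_form_le_image_norm:
  fixes A :: "real^'n^'n"
  assumes ge: "\<And>u. m * (u \<bullet> u) \<le> u \<bullet> (A *v u)" and m: "0 < m"
  shows "q \<bullet> (A *v q) \<le> (A *v q) \<bullet> (A *v q) / m"
proof -
  have cs: "q \<bullet> (A *v q) \<le> norm q * norm (A *v q)"
    by (rule norm_cauchy_schwarz)
  have "m * norm q \<le> norm (A *v q)" if "q \<noteq> 0"
  proof -
    have "norm q * (m * norm q) \<le> norm q * norm (A *v q)"
      using ge[of q] cs by (simp add: power2_norm_eq_inner[symmetric] power2_eq_square algebra_simps)
    then show ?thesis using that by simp
  qed
  then have "m * norm q * norm (A *v q) \<le> norm (A *v q) * norm (A *v q)"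
    by (cases "q = 0") (auto intro: mult_right_mono)
  moreover have "m * (q \<bullet> (A *v q)) \<le> m * (norm q * norm (A *v q))"
    using cs m by simp
  ultimately have "m * (q \<bullet> (A *v q)) \<le> norm (A *v q) * norm (A *v q)"
    by linarith
  then show ?thesis
    using m by (simp add: le_divide_eq power2_norm_eq_inner[symmetric] power2_eq_square mult.commute)
qed

text \<open>With \<open>p = A\<^sup>-\<^sup>1 G\<close> and \<open>q = y - p\<close> the right-hand side equals
  \<open>p \<bullet> A p - q \<bullet> A q\<close>, and both quadratic forms are bounded by the two lemmas above.\<close>
lemma preconditioned_descent_bound:
  fixes A :: "real^'n^'n"
  assumes sym: "transpose A = A" and ge: "\<And>u. m * (u \<bullet> u) \<le> u \<bullet> (A *v u)" and m: "0 < m"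
    and le: "\<And>u. u \<bullet> (A *v u) \<le> M * (u \<bullet> u)" and M: "0 < M"
    and solution: "A *v p = G"
  shows "G \<bullet> G / M - (A *v y - G) \<bullet> (A *v y - G) / m \<le> 2 * (G \<bullet> y) - y \<bullet> (A *v y)"
proof -
  define q where "q = y - p"
  have Aq: "A *v q = A *v y - G"
    by (simp add: q_def solution matrix_vector_mult_diff_distrib)
  have "G \<bullet> y = p \<bullet> (A *v y)"
    using symmetric_matrix_inner_swap[OF sym, of p y] solution by simp
  moreover have "q \<bullet> (A *v p) = p \<bullet> (A *v q)"
    using symmetric_matrix_inner_swap[OF sym, of q p] by (simp add: inner_commute)
  ultimately have "2 * (G \<bullet> y) - y \<bullet> (A *v y) = p \<bullet> (A *v p) - q \<bullet> (A *v q)"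
    by (simp add: q_def algebra_simps inner_diff_left inner_diff_right matrix_vector_mult_diff_distrib)
  with inner_le_quadratic_form_of_solution[OF sym ge m le M solution]
    quadratic_form_le_image_norm[OF ge m, of q]
  show ?thesis by (simp add: Aq)
qed

lemma invertible_mult_matrix_inv_vector:
  fixes A :: "'a::comm_ring_1^'n^'n"
  assumes "invertible A"
  shows "A *v (matrix_inv A *v v) = v"
proof -
  from assms obtain B where "A ** B = mat 1 \<and> B ** A = mat 1"
    unfolding invertible_def by blast
  then have "A ** matrix_inv A = mat 1"
    unfolding matrix_inv_def by (rule someI2) blast
  then show ?thesis by (simp add: matrix_vector_mul_assoc)
qed

lemma invertible_of_quadratic_form_ge:
  fixes A :: "real^'n^'n"
  assumes ge: "\<And>u. m * (u \<bullet> u) \<le> u \<bullet> (A *v u)" and m: "0 < m"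
  shows "invertible A"
proof -
  have "x = 0" if "A *v x = 0" for x
  proof -
    have "x \<bullet> x \<le> 0"
      using ge[of x] m that by (simp add: mult_le_0_iff)
    then show "x = 0" by (metis inner_gt_zero_iff not_le)
  qed
  then show ?thesis
    using matrix_left_invertible_ker invertible_left_inverse by blast
qed

lemma newton_step_decrease:
  fixes F :: "real^'n \<Rightarrow> real" and A :: "real^'n^'n"
  assumes F': "\<And>x. (F has_derivative (\<lambda>h. GF x \<bullet> h)) (at x)"
    and F'': "\<And>x. (GF has_derivative (\<lambda>h. HF x *v h)) (at x)"
    and HF_ge: "\<And>x u. mu * (u \<bullet> u) \<le> u \<bullet> (HF x *v u)"
    and HF_le: "\<And>x u. u \<bullet> (HF x *v u) \<le> L * (u \<bullet> u)"
    and mu: "0 < mu" and L: "0 < L"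
    and minimizer: "\<And>x. F wmin \<le> F x"
    and sym: "transpose A = A"
    and A_ge: "\<And>u. mb * (u \<bullet> u) \<le> u \<bullet> (A *v u)" and mb: "0 < mb"
    and A_le: "\<And>u. u \<bullet> (A *v u) \<le> Lbb * (u \<bullet> u)" and Lbb: "0 < Lbb"
  shows "F (w - (mb/L) *\<^sub>R (matrix_inv A *v gX)) - F wmin
    \<le> (1 - mu * mb / (L * Lbb)) * (F w - F wmin) + (gX - GF w) \<bullet> (gX - GF w) / (2 * L)"
proof -
  define \<alpha> where "\<alpha> = mb / L"
  define y where "y = matrix_inv A *v gX"
  define G where "G = GF w"
  define e where "e = gX - G"
  have \<alpha>: "0 < \<alpha>" using mb L by (simp add: \<alpha>_def)
  have inv: "invertible A" by (rule invertible_of_quadratic_form_ge[OF A_ge mb])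
  have Ay: "A *v y = gX"
    unfolding y_def by (rule invertible_mult_matrix_inv_vector[OF inv])
  have descent: "F (w - \<alpha> *\<^sub>R y) \<le> F w - \<alpha> * (G \<bullet> y) + L/2 * \<alpha>^2 * (y \<bullet> y)"
    using quadratic_upper_bound_of_hessian_le[OF F' F'' HF_le, of w "- \<alpha> *\<^sub>R y"]
    by (simp add: G_def power2_eq_square algebra_simps)
  have "L/2 * \<alpha>^2 * (mb * (y \<bullet> y)) \<le> L/2 * \<alpha>^2 * (y \<bullet> (A *v y))"
    using A_ge[of y] L by (intro mult_left_mono) auto
  then have curvature: "L/2 * \<alpha>^2 * (y \<bullet> y) \<le> \<alpha>/2 * (y \<bullet> (A *v y))"
    using mb L by (simp add: \<alpha>_def power2_eq_square field_simps)
  have "G \<bullet> G / Lbb - e \<bullet> e / mb \<le> 2 * (G \<bullet> y) - y \<bullet> (A *v y)"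
    using preconditioned_descent_bound[OF sym A_ge mb A_le Lbb
        invertible_mult_matrix_inv_vector[OF inv], of G y]
    by (simp add: Ay e_def)
  then have preconditioned: "\<alpha>/2 * (G \<bullet> G / Lbb - e \<bullet> e / mb) \<le> \<alpha>/2 * (2 * (G \<bullet> y) - y \<bullet> (A *v y))"
    using \<alpha> by (intro mult_left_mono) auto
  have "\<alpha>/2 * (2 * mu * (F w - F wmin) / Lbb) \<le> \<alpha>/2 * (G \<bullet> G / Lbb)"
    using polyak_lojasiewicz_of_hessian_ge[OF F' F'' HF_ge mu minimizer, of w] \<alpha> Lbb
    by (intro mult_left_mono divide_right_mono) (auto simp: G_def)
  moreover have "\<alpha>/2 * (2 * mu * (F w - F wmin) / Lbb) = mu * mb / (L * Lbb) * (F w - F wmin)"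
    "\<alpha>/2 * (e \<bullet> e / mb) = e \<bullet> e / (2 * L)"
    using mb L Lbb by (simp_all add: \<alpha>_def field_simps)
  ultimately show ?thesis
    using descent curvature preconditioned
    by (simp add: \<alpha>_def[symmetric] y_def[symmetric] e_def[symmetric] G_def[symmetric]
        right_diff_distrib algebra_simps)
qed

section \<open>Mean squared error of independent sample means\<close>

lemma (in prob_space) indep_identically_distributed_product_integral:
  fixes Z :: "'i \<Rightarrow> 'a \<Rightarrow> 'z" and h :: "'z \<Rightarrow> real"
  assumes indep: "indep_vars (\<lambda>_. P) Z UNIV"
    and distr: "\<And>i. distr M P (Z i) = P"
    and h_meas: "h \<in> borel_measurable P" and h_int: "integrable P h"
    and h_sq_int: "integrable P (\<lambda>z. h z * h z)"
    and centered: "(\<integral>z. h z \<partial>P) = 0"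
  shows "integrable M (\<lambda>\<omega>. h (Z a \<omega>) * h (Z b \<omega>))"
    and "(\<integral>\<omega>. h (Z a \<omega>) * h (Z b \<omega>) \<partial>M) = (if a = b then \<integral>z. h z * h z \<partial>P else 0)"
proof -
  have Z_meas: "Z i \<in> measurable M P" for i
    using indep unfolding indep_vars_def by auto
  have h_sq_meas: "(\<lambda>z. h z * h z) \<in> borel_measurable P"
    using h_meas by measurable
  have transfer: "integrable M (\<lambda>\<omega>. u (Z i \<omega>)) \<and> (\<integral>\<omega>. u (Z i \<omega>) \<partial>M) = (\<integral>z. u z \<partial>P)"
    if "u \<in> borel_measurable P" "integrable P u" for u :: "'z \<Rightarrow> real" and i
    using integrable_distr_eq[OF Z_meas[of i] that(1)] integral_distr[OF Z_meas[of i] that(1)] that(2) distr[of i]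
    by simp
  have "integrable M (\<lambda>\<omega>. h (Z a \<omega>) * h (Z b \<omega>)) \<and>
      (\<integral>\<omega>. h (Z a \<omega>) * h (Z b \<omega>) \<partial>M) = (if a = b then \<integral>z. h z * h z \<partial>P else 0)"
  proof (cases "a = b")
    case True
    then show ?thesis using transfer[OF h_sq_meas h_sq_int, of b] by simp
  next
    case False
    have "indep_var (PiM {a} (\<lambda>_. P)) (\<lambda>\<omega>. restrict (\<lambda>i. Z i \<omega>) {a})
        (PiM {b} (\<lambda>_. P)) (\<lambda>\<omega>. restrict (\<lambda>i. Z i \<omega>) {b})"
      by (rule indep_var_restrict[OF indep]) (use False in auto)
    from indep_var_compose[OF this, of "\<lambda>y. h (y a)" borel "\<lambda>y. h (y b)" borel]
    have "indep_var borel (\<lambda>\<omega>. h (Z a \<omega>)) borel (\<lambda>\<omega>. h (Z b \<omega>))"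
      using h_meas by (simp add: comp_def)
    moreover have int: "integrable M (\<lambda>\<omega>. h (Z i \<omega>))" "(\<integral>\<omega>. h (Z i \<omega>) \<partial>M) = 0" for i
      using transfer[OF h_meas h_int, of i] centered by simp_all
    ultimately show ?thesis
      using indep_var_integrable[OF _ int(1) int(1)] indep_var_lebesgue_integral[OF _ int(1) int(1)]
        int(2) False by simp
  qed
  then show "integrable M (\<lambda>\<omega>. h (Z a \<omega>) * h (Z b \<omega>))"
    and "(\<integral>\<omega>. h (Z a \<omega>) * h (Z b \<omega>) \<partial>M) = (if a = b then \<integral>z. h z * h z \<partial>P else 0)"
    by simp_all
qed

lemma integrable_component_square:
  fixes g :: "'z \<Rightarrow> real^'n"
  assumes "g \<in> borel_measurable P" and "integrable P (\<lambda>z. (norm (g z))\<^sup>2)"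
  shows "integrable P (\<lambda>z. (g z $ i)\<^sup>2)"
proof (rule Bochner_Integration.integrable_bound[OF assms(2)])
  show "(\<lambda>z. (g z $ i)\<^sup>2) \<in> borel_measurable P"
    using measurable_compose[OF assms(1) borel_measurable_nth] by measurable
  have "(g z $ i)\<^sup>2 \<le> (norm (g z))\<^sup>2" for z
    by (metis abs_ge_zero component_le_norm_cart power2_abs power_mono)
  then show "AE z in P. norm ((g z $ i)\<^sup>2) \<le> norm ((norm (g z))\<^sup>2)"
    by simp
qed

lemma norm_sample_mean_diff_squared:
  fixes x :: "nat \<Rightarrow> real^'n"
  assumes "1 \<le> n"
  shows "(norm ((1 / real n) *\<^sub>R (\<Sum>j<n. x j) - G))\<^sup>2
    = 1 / (real n)\<^sup>2 * (\<Sum>i\<in>UNIV. \<Sum>j<n. \<Sum>l<n. (x j $ i - G $ i) * (x l $ i - G $ i))"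
proof -
  have "((1 / real n) *\<^sub>R (\<Sum>j<n. x j) - G) $ i = (1 / real n) * (\<Sum>j<n. x j $ i - G $ i)" for i
    using assms by (simp add: sum_component sum_subtractf field_simps)
  then show ?thesis
    unfolding power2_norm_eq_inner inner_vec_def
    by (simp add: sum_product sum_distrib_left power2_eq_square algebra_simps)
qed

text \<open>Cross terms vanish coordinatewise by independence.\<close>
lemma (in prob_space) sample_mean_sq_error_le:
  fixes Z :: "'i \<Rightarrow> 'a \<Rightarrow> 'z" and g :: "'z \<Rightarrow> real^'n" and \<iota> :: "nat \<Rightarrow> 'i"
  assumes P: "prob_space P"
    and indep: "indep_vars (\<lambda>_. P) Z UNIV"
    and distr: "\<And>i. distr M P (Z i) = P"
    and g_meas: "g \<in> borel_measurable P" and g_int: "integrable P g"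
    and g_sq_int: "integrable P (\<lambda>z. (norm (g z))\<^sup>2)"
    and mean: "(\<integral>z. g z \<partial>P) = G"
    and tr_cov: "tr_cov P g \<le> v\<^sup>2"
    and inj: "inj \<iota>" and n: "1 \<le> n"
  shows "(\<integral>\<^sup>+\<omega>. ennreal ((norm ((1 / real n) *\<^sub>R (\<Sum>j<n. g (Z (\<iota> j) \<omega>)) - G))\<^sup>2) \<partial>M)
    \<le> ennreal (v\<^sup>2 / n)"
proof -
  interpret P: prob_space P by (rule P)
  define h where "h i z = g z $ i - G $ i" for i z
  have g_nth_meas: "(\<lambda>z. g z $ i) \<in> borel_measurable P" for i
    using measurable_compose[OF g_meas borel_measurable_nth] .
  have g_nth_int: "integrable P (\<lambda>z. g z $ i)" for i
    using integrable_inner_left[OF g_int, of "axis i 1"] by (simp add: cart_eq_inner_axis)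
  have g_nth_mean: "(\<integral>z. g z $ i \<partial>P) = G $ i" for i
    using integral_inner_left[of "axis i 1" P g] g_int mean by (simp add: cart_eq_inner_axis)
  have h_meas: "h i \<in> borel_measurable P" for i
    unfolding h_def using g_nth_meas by measurable
  have h_int: "integrable P (h i)" for i
    unfolding h_def using g_nth_int by simp
  have h_centered: "(\<integral>z. h i z \<partial>P) = 0" for i
    unfolding h_def using g_nth_int g_nth_mean by (simp add: P.prob_space)
  have h_sq_int: "integrable P (\<lambda>z. h i z * h i z)" for i
  proof -
    have "(\<lambda>z. h i z * h i z) = (\<lambda>z. (g z $ i)\<^sup>2 - 2 * G $ i * g z $ i + (G $ i)\<^sup>2)"
      by (auto simp: h_def power2_eq_square algebra_simps)
    then show ?thesis
      using integrable_component_square[OF g_meas g_sq_int] g_nth_int by simp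
  qed
  note cross = indep_identically_distributed_product_integral[OF indep distr h_meas h_int h_sq_int h_centered]
  define \<phi> where "\<phi> \<omega> = 1 / (real n)\<^sup>2 * (\<Sum>i\<in>UNIV. \<Sum>j<n. \<Sum>l<n. h i (Z (\<iota> j) \<omega>) * h i (Z (\<iota> l) \<omega>))" for \<omega>
  have expand: "(norm ((1 / real n) *\<^sub>R (\<Sum>j<n. g (Z (\<iota> j) \<omega>)) - G))\<^sup>2 = \<phi> \<omega>" for \<omega>
    unfolding \<phi>_def h_def by (rule norm_sample_mean_diff_squared[OF n])
  have "(\<integral>\<omega>. \<phi> \<omega> \<partial>M) = 1 / (real n)\<^sup>2 * (\<Sum>i\<in>UNIV. \<Sum>j<n. \<Sum>l<n. if \<iota> j = \<iota> l then \<integral>z. h i z * h i z \<partial>P else 0)"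
    unfolding \<phi>_def using cross by (simp add: integral_sum)
  also have "\<dots> = 1 / (real n)\<^sup>2 * (real n * tr_cov P g)"
    using inj by (simp add: inj_eq tr_cov_def h_def g_nth_mean power2_eq_square sum_distrib_left)
  finally have "(\<integral>\<omega>. \<phi> \<omega> \<partial>M) = tr_cov P g / n"
    by (simp add: power2_eq_square)
  moreover have "integrable M \<phi>"
    unfolding \<phi>_def using cross(1) by simp
  ultimately have "(\<integral>\<^sup>+\<omega>. ennreal (\<phi> \<omega>) \<partial>M) = ennreal (tr_cov P g / n)"
    using nn_integral_eq_integral[of M \<phi>] expand by (metis AE_I2 zero_le_power2)
  also have "\<dots> \<le> ennreal (v\<^sup>2 / n)"
    using tr_cov by (intro ennreal_leI divide_right_mono) auto
  finally show ?thesis by (simp add: expand)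
qed

section \<open>Measurability of the iteration\<close>

lemma borel_measurable_vec_nth [measurable (raw)]:
  fixes f :: "'a \<Rightarrow> real^'n"
  assumes "f \<in> borel_measurable M"
  shows "(\<lambda>x. f x $ i) \<in> borel_measurable M"
  by (rule measurable_compose[OF assms borel_measurable_nth])

lemma borel_measurable_mat_row [measurable (raw)]:
  fixes f :: "'a \<Rightarrow> real^'n^'m"
  assumes "f \<in> borel_measurable M"
  shows "(\<lambda>x. f x $ i) \<in> borel_measurable M"
  by (rule measurable_compose[OF assms
        borel_measurable_continuous_onI[OF continuous_on_component[OF continuous_on_id]]])

lemma borel_measurable_vec_lambda:
  fixes f :: "'a \<Rightarrow> real^'n"
  assumes "\<And>i. (\<lambda>x. f x $ i) \<in> borel_measurable M"
  shows "f \<in> borel_measurable M"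
proof (subst borel_measurable_euclidean_space, intro ballI)
  fix b :: "real^'n" assume "b \<in> Basis"
  then obtain i where "b = axis i 1" by (auto simp: Basis_vec_def)
  then show "(\<lambda>x. f x \<bullet> b) \<in> borel_measurable M"
    using assms[of i] by (simp add: inner_axis)
qed

lemma borel_measurable_det:
  fixes B :: "'a \<Rightarrow> real^'n^'n"
  assumes "\<And>i j. (\<lambda>x. B x $ i $ j) \<in> borel_measurable M"
  shows "(\<lambda>x. det (B x)) \<in> borel_measurable M"
  unfolding det_def using assms by measurable

text \<open>\<open>matrix_inv\<close> is defined by choice, so its measurability is obtained
  through Cramer's rule.\<close>
definition cramer_solution :: "real^'n^'n \<Rightarrow> real^'n \<Rightarrow> real^'n" where
  "cramer_solution A v = (\<chi> k. det (\<chi> i j. if j = k then v $ i else A $ i $ j) / det A)"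

lemma borel_measurable_cramer_solution [measurable (raw)]:
  fixes A :: "'a \<Rightarrow> real^'n^'n" and v :: "'a \<Rightarrow> real^'n"
  assumes [measurable]: "A \<in> borel_measurable M" "v \<in> borel_measurable M"
  shows "(\<lambda>x. cramer_solution (A x) (v x)) \<in> borel_measurable M"
proof (rule borel_measurable_vec_lambda)
  fix k
  have "(\<lambda>x. det (\<chi> i j. if j = k then v x $ i else A x $ i $ j)) \<in> borel_measurable M"
    by (rule borel_measurable_det) simp
  moreover have "(\<lambda>x. det (A x)) \<in> borel_measurable M"
    by (rule borel_measurable_det) simp
  ultimately show "(\<lambda>x. cramer_solution (A x) (v x) $ k) \<in> borel_measurable M"
    unfolding cramer_solution_def by simp
qed

lemma matrix_inv_mult_vector_eq_cramer_solution:
  fixes A :: "real^'n^'n"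
  assumes "det A \<noteq> 0"
  shows "matrix_inv A *v v = cramer_solution A v"
  using cramer[OF assms] invertible_mult_matrix_inv_vector[of A v] assms
  unfolding cramer_solution_def by (simp add: invertible_det_nz)

lemma sn_iter_cong_past_samples:
  assumes "\<And>i. fst (snd i) < k \<Longrightarrow> Z i \<omega> = Z' i \<omega>'"
  shows "sn_iter g H Z nX b \<alpha> w0 k \<omega> = sn_iter g H Z' nX b \<alpha> w0 k \<omega>'"
  using assms by (induction k) (simp_all add: Let_def)

lemma measurable_compose_uncurried:
  fixes g :: "'z \<Rightarrow> 'b::topological_space \<Rightarrow> 'c::topological_space"
  assumes "(\<lambda>(z, w). g z w) \<in> borel_measurable (P \<Otimes>\<^sub>M borel)"
    and "f \<in> measurable N P" and "\<Phi> \<in> borel_measurable N"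
  shows "(\<lambda>x. g (f x) (\<Phi> x)) \<in> borel_measurable N"
  using measurable_compose[OF measurable_Pair[OF assms(2,3)] assms(1)] by simp

text \<open>The \<open>k\<close>-th iterate as a function of the sample points drawn before step \<open>k\<close>.\<close>
lemma sn_iter_measurable_in_samples:
  fixes g :: "'z \<Rightarrow> real^'n \<Rightarrow> real^'n" and H :: "'z \<Rightarrow> real^'n \<Rightarrow> real^'n^'n"
  assumes g_meas: "(\<lambda>(z, w). g z w) \<in> borel_measurable (P \<Otimes>\<^sub>M borel)"
    and H_meas: "(\<lambda>(z, w). H z w) \<in> borel_measurable (P \<Otimes>\<^sub>M borel)"
    and nonsingular: "\<And>f w. (\<And>j. j < b \<Longrightarrow> f j \<in> space P) \<Longrightarrow> det ((1 / real b) *\<^sub>R (\<Sum>j<b. H (f j) w)) \<noteq> 0"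
    and past: "{i. fst (snd i) < k} \<subseteq> S"
  shows "(\<lambda>x. sn_iter g H (\<lambda>i x. x i) nX b \<alpha> w0 k x) \<in> borel_measurable (PiM S (\<lambda>_. P))"
  using past
proof (induction k)
  case 0
  then show ?case by simp
next
  case (Suc k)
  define \<Phi> where "\<Phi> x = sn_iter g H (\<lambda>i x. x i) nX b \<alpha> w0 k x" for x
  have \<Phi>_meas: "\<Phi> \<in> borel_measurable (PiM S (\<lambda>_. P))"
  proof -
    have "{i. fst (snd i) < k} \<subseteq> S" using Suc.prems by auto
    then show ?thesis using Suc.IH unfolding \<Phi>_def by (simp add: eta_contract_eq)
  qed
  have sample: "(t, k, j) \<in> S" for t j
    using Suc.prems by auto
  define gX where "gX x = (1 / real (nX k)) *\<^sub>R (\<Sum>j<nX k. g (x (True, k, j)) (\<Phi> x))" for x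
  define HS where "HS x = (1 / real b) *\<^sub>R (\<Sum>j<b. H (x (False, k, j)) (\<Phi> x))" for x
  have sample_means_meas: "gX \<in> borel_measurable (PiM S (\<lambda>_. P))" "HS \<in> borel_measurable (PiM S (\<lambda>_. P))"
    unfolding gX_def HS_def
    by (intro borel_measurable_scaleR borel_measurable_const borel_measurable_sum
        measurable_compose_uncurried[OF g_meas _ \<Phi>_meas] measurable_compose_uncurried[OF H_meas _ \<Phi>_meas]
        measurable_component_singleton sample)+
  have step: "sn_iter g H (\<lambda>i x. x i) nX b \<alpha> w0 (Suc k) x = \<Phi> x - \<alpha> *\<^sub>R cramer_solution (HS x) (gX x)"
    if "x \<in> space (PiM S (\<lambda>_. P))" for x
  proof -
    have "det (HS x) \<noteq> 0"
      unfolding HS_def using that sample by (intro nonsingular) (auto simp: space_PiM)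
    then show ?thesis
      by (simp add: Let_def \<Phi>_def[symmetric] gX_def[symmetric] HS_def[symmetric]
          matrix_inv_mult_vector_eq_cramer_solution)
  qed
  show ?case
    by (subst measurable_cong[OF step])
      (auto intro!: borel_measurable_diff borel_measurable_scaleR borel_measurable_const
        borel_measurable_cramer_solution sample_means_meas \<Phi>_meas)
qed

lemma (in prob_space) nn_integral_indep_var_le:
  assumes indep: "indep_var SA U SB Y"
    and q_meas: "q \<in> borel_measurable (SA \<Otimes>\<^sub>M SB)"
    and bound: "\<And>u. u \<in> space SA \<Longrightarrow> (\<integral>\<^sup>+\<omega>. q (u, Y \<omega>) \<partial>M) \<le> B"
  shows "(\<integral>\<^sup>+\<omega>. q (U \<omega>, Y \<omega>) \<partial>M) \<le> B"
proof -
  have U: "U \<in> measurable M SA" and Y: "Y \<in> measurable M SB"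
    using indep_var_rv1[OF indep] indep_var_rv2[OF indep] by auto
  interpret PU: prob_space "distr M SA U" by (rule prob_space_distr[OF U])
  interpret PY: prob_space "distr M SB Y" by (rule prob_space_distr[OF Y])
  have sets: "sets (distr M SA U \<Otimes>\<^sub>M distr M SB Y) = sets (SA \<Otimes>\<^sub>M SB)"
    by (rule sets_pair_measure_cong) simp_all
  have "(\<integral>\<^sup>+\<omega>. q (U \<omega>, Y \<omega>) \<partial>M) = (\<integral>\<^sup>+x. q x \<partial>distr M (SA \<Otimes>\<^sub>M SB) (\<lambda>\<omega>. (U \<omega>, Y \<omega>)))"
    by (rule nn_integral_distr[symmetric]) (auto intro: measurable_Pair U Y q_meas)
  also have "\<dots> = (\<integral>\<^sup>+x. q x \<partial>(distr M SA U \<Otimes>\<^sub>M distr M SB Y))"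
    using indep by (simp add: indep_var_distribution_eq)
  also have "\<dots> = (\<integral>\<^sup>+u. \<integral>\<^sup>+y. q (u, y) \<partial>distr M SB Y \<partial>distr M SA U)"
    using q_meas measurable_cong_sets[OF sets refl]
    by (intro sigma_finite_measure.nn_integral_fst[symmetric] PY.sigma_finite_measure_axioms) simp
  also have "\<dots> \<le> (\<integral>\<^sup>+u. B \<partial>distr M SA U)"
  proof (rule nn_integral_mono)
    fix u assume "u \<in> space (distr M SA U)"
    then have u: "u \<in> space SA" by simp
    have "(\<lambda>y. q (u, y)) \<in> borel_measurable SB"
      using measurable_compose[OF measurable_Pair1'[OF u] q_meas] by simp
    then show "(\<integral>\<^sup>+y. q (u, y) \<partial>distr M SB Y) \<le> B"
      using bound[OF u] by (simp add: nn_integral_distr[OF Y])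
  qed
  also have "\<dots> = B"
    using PU.emeasure_space_1 by simp
  finally show ?thesis .
qed

lemma ennreal_le_affine_combination:
  fixes x a b y z :: real
  assumes "x \<le> a * y + b * z" and "0 \<le> a" "0 \<le> b" "0 \<le> y" "0 \<le> z"
  shows "ennreal x \<le> ennreal a * ennreal y + ennreal b * ennreal z"
proof -
  have "ennreal x \<le> ennreal (a * y + b * z)"
    using assms(1) by (rule ennreal_leI)
  also have "\<dots> = ennreal a * ennreal y + ennreal b * ennreal z"
    using assms(2-) by (simp add: ennreal_plus ennreal_mult)
  finally show ?thesis .
qed

section \<open>The subsampled Newton iteration\<close>

text \<open>Assumption A1 enters only for the Hessian sample size \<open>b\<close>, with \<open>mb = \<mu>\<^sub>b\<close> and
  \<open>Lbb = L\<^sub>b\<close>.\<close>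
locale subsampled_newton = M: prob_space M + P: prob_space P
  for M :: "'w measure" and P :: "'z measure" +
  fixes Z :: "bool \<times> nat \<times> nat \<Rightarrow> 'w \<Rightarrow> 'z"
    and g :: "'z \<Rightarrow> real^'n \<Rightarrow> real^'n" and H :: "'z \<Rightarrow> real^'n \<Rightarrow> real^'n^'n"
    and F :: "real^'n \<Rightarrow> real" and GF :: "real^'n \<Rightarrow> real^'n" and HF :: "real^'n \<Rightarrow> real^'n^'n"
    and b :: nat and mb Lbb mu L v :: real and wstar :: "real^'n"
  assumes Z_indep: "M.indep_vars (\<lambda>_. P) Z UNIV"
    and Z_distr: "\<And>i. distr M P (Z i) = P"
    and g_meas: "(\<lambda>(z, w). g z w) \<in> borel_measurable (P \<Otimes>\<^sub>M borel)"
    and H_meas: "(\<lambda>(z, w). H z w) \<in> borel_measurable (P \<Otimes>\<^sub>M borel)"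
    and g_int: "\<And>w. integrable P (\<lambda>z. g z w)"
    and g_sq_int: "\<And>w. integrable P (\<lambda>z. (norm (g z w))\<^sup>2)"
    and GF_exp: "\<And>w. GF w = (\<integral>z. g z w \<partial>P)"
    and tr_cov_le: "\<And>w. tr_cov P (\<lambda>z. g z w) \<le> v\<^sup>2"
    and F_grad: "\<And>w. (F has_derivative (\<lambda>h. GF w \<bullet> h)) (at w)"
    and F_hess: "\<And>w. (GF has_derivative (\<lambda>h. HF w *v h)) (at w)"
    and HF_ge: "\<And>w. loewner_le (mu *\<^sub>R mat 1) (HF w)"
    and HF_le: "\<And>w. loewner_le (HF w) (L *\<^sub>R mat 1)"
    and mu_pos: "0 < mu" and mu_le_L: "mu \<le> L"
    and wstar_min: "\<And>w. F wstar \<le> F w"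
    and sample_hessian_ge: "\<And>f w. (\<And>j. j < b \<Longrightarrow> f j \<in> space P) \<Longrightarrow>
      loewner_le (mb *\<^sub>R mat 1) ((1 / real b) *\<^sub>R (\<Sum>j<b. H (f j) w))"
    and sample_hessian_le: "\<And>f w. (\<And>j. j < b \<Longrightarrow> f j \<in> space P) \<Longrightarrow>
      loewner_le ((1 / real b) *\<^sub>R (\<Sum>j<b. H (f j) w)) (Lbb *\<^sub>R mat 1)"
    and mb_pos: "0 < mb" and mb_le_Lbb: "mb \<le> Lbb"
begin

abbreviation iterate :: "(nat \<Rightarrow> nat) \<Rightarrow> real^'n \<Rightarrow> nat \<Rightarrow> 'w \<Rightarrow> real^'n" where
  "iterate nX w0 \<equiv> sn_iter g H Z nX b (mb / L) w0"

abbreviation iterate_of_samples :: "(nat \<Rightarrow> nat) \<Rightarrow> real^'n \<Rightarrow> nat \<Rightarrow> (bool \<times> nat \<times> nat \<Rightarrow> 'z) \<Rightarrow> real^'n" where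
  "iterate_of_samples nX w0 \<equiv> sn_iter g H (\<lambda>i x. x i) nX b (mb / L) w0"

abbreviation past :: "nat \<Rightarrow> (bool \<times> nat \<times> nat) set" where
  "past k \<equiv> {i. fst (snd i) < k}"

lemma L_pos: "0 < L"
  using mu_pos mu_le_L by linarith

lemma Z_measurable: "Z i \<in> measurable M P"
  using Z_indep unfolding M.indep_vars_def by (metis UNIV_I)

lemma GF_measurable: "GF \<in> borel_measurable borel"
  using has_derivative_continuous[OF F_hess]
  by (intro borel_measurable_continuous_onI continuous_at_imp_continuous_on) blast

lemma F_measurable: "F \<in> borel_measurable borel"
  using has_derivative_continuous[OF F_grad]
  by (intro borel_measurable_continuous_onI continuous_at_imp_continuous_on) blast

lemma iterate_eq_iterate_of_samples:
  "iterate nX w0 k \<omega> = iterate_of_samples nX w0 k (restrict (\<lambda>i. Z i \<omega>) (past k))"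
  by (rule sn_iter_cong_past_samples) simp

lemma iterate_of_samples_measurable:
  "iterate_of_samples nX w0 k \<in> borel_measurable (PiM (past k) (\<lambda>_. P))"
proof (rule sn_iter_measurable_in_samples[OF g_meas H_meas _ subset_refl])
  fix f w assume "\<And>j. j < b \<Longrightarrow> f j \<in> space P"
  from sample_hessian_ge[OF this]
  have "invertible ((1 / real b) *\<^sub>R (\<Sum>j<b. H (f j) w))"
    by (intro invertible_of_quadratic_form_ge[OF _ mb_pos] loewner_le_scaleR_mat_1_leftD)
  then show "det ((1 / real b) *\<^sub>R (\<Sum>j<b. H (f j) w)) \<noteq> 0"
    by (simp add: invertible_det_nz)
qed

lemma iterate_measurable: "iterate nX w0 k \<in> borel_measurable M"
  unfolding iterate_eq_iterate_of_samples
  by (rule measurable_compose[OF measurable_restrict[OF Z_measurable] iterate_of_samples_measurable])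

text \<open>The gradient sample of step \<open>k\<close> is independent of the iterate \<open>w\<^sub>k\<close>, which
  depends only on earlier samples; conditioning on the past reduces the claim to
  a fixed point \<open>w\<close>.\<close>
lemma gradient_sample_error_le:
  assumes n: "1 \<le> nX k"
  shows "(\<integral>\<^sup>+\<omega>. ennreal ((norm ((1 / real (nX k)) *\<^sub>R (\<Sum>j<nX k. g (Z (True, k, j) \<omega>) (iterate nX w0 k \<omega>))
      - GF (iterate nX w0 k \<omega>)))\<^sup>2) \<partial>M) \<le> ennreal (v\<^sup>2 / nX k)"
proof -
  define \<Phi> where "\<Phi> = iterate_of_samples nX w0 k"
  define B where "B = {i :: bool \<times> nat \<times> nat. fst (snd i) = k}"
  define SA where "SA = PiM (past k) (\<lambda>_. P)"
  define SB where "SB = PiM B (\<lambda>_. P)"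
  have sample: "(True, k, j) \<in> B" for j
    by (simp add: B_def)
  define q where "q x = ennreal ((norm ((1 / real (nX k)) *\<^sub>R (\<Sum>j<nX k. g (snd x (True, k, j)) (\<Phi> (fst x)))
      - GF (\<Phi> (fst x))))\<^sup>2)" for x
  have \<Phi>_meas: "(\<lambda>x. \<Phi> (fst x)) \<in> borel_measurable (SA \<Otimes>\<^sub>M SB)"
    using iterate_of_samples_measurable unfolding \<Phi>_def SA_def by measurable
  have "(\<lambda>x. snd x (True, k, j)) \<in> measurable (SA \<Otimes>\<^sub>M SB) P" for j
    unfolding SB_def using sample by measurable
  then have q_meas: "q \<in> borel_measurable (SA \<Otimes>\<^sub>M SB)"
    unfolding q_def
    using measurable_compose_uncurried[OF g_meas _ \<Phi>_meas] measurable_compose[OF \<Phi>_meas GF_measurable]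
    by measurable
  have indep: "M.indep_var SA (\<lambda>\<omega>. restrict (\<lambda>i. Z i \<omega>) (past k)) SB (\<lambda>\<omega>. restrict (\<lambda>i. Z i \<omega>) B)"
    unfolding SA_def SB_def by (rule M.indep_var_restrict[OF Z_indep]) (auto simp: B_def)
  have bound: "(\<integral>\<^sup>+\<omega>. q (u, restrict (\<lambda>i. Z i \<omega>) B) \<partial>M) \<le> ennreal (v\<^sup>2 / nX k)" for u
  proof -
    have "(\<lambda>z. g z (\<Phi> u)) \<in> borel_measurable P"
      by (rule measurable_compose_uncurried[OF g_meas measurable_ident_sets[OF refl] borel_measurable_const])
    from M.sample_mean_sq_error_le[OF P.prob_space_axioms Z_indep Z_distr this g_int g_sq_int
        GF_exp[symmetric] tr_cov_le _ n, of "\<lambda>j. (True, k, j)"]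
    show ?thesis by (simp add: q_def sample inj_def)
  qed
  from M.nn_integral_indep_var_le[OF indep q_meas bound]
  show ?thesis
    by (simp add: q_def \<Phi>_def sample iterate_eq_iterate_of_samples[of nX w0 k])
qed

lemma iterate_gap_step:
  assumes "\<omega> \<in> space M"
  shows "F (iterate nX w0 (Suc k) \<omega>) - F wstar \<le> (1 - mu * mb / (L * Lbb)) * (F (iterate nX w0 k \<omega>) - F wstar)
    + (norm ((1 / real (nX k)) *\<^sub>R (\<Sum>j<nX k. g (Z (True, k, j) \<omega>) (iterate nX w0 k \<omega>))
      - GF (iterate nX w0 k \<omega>)))\<^sup>2 / (2 * L)"
proof -
  define W where "W = iterate nX w0 k \<omega>"
  define gX where "gX = (1 / real (nX k)) *\<^sub>R (\<Sum>j<nX k. g (Z (True, k, j) \<omega>) W)"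
  define A where "A = (1 / real b) *\<^sub>R (\<Sum>j<b. H (Z (False, k, j) \<omega>) W)"
  have samples: "Z (False, k, j) \<omega> \<in> space P" for j
    using measurable_space[OF Z_measurable assms] .
  have A_ge: "loewner_le (mb *\<^sub>R mat 1) A"
    unfolding A_def by (rule sample_hessian_ge[OF samples])
  have A_le: "loewner_le A (Lbb *\<^sub>R mat 1)"
    unfolding A_def by (rule sample_hessian_le[OF samples])
  have step: "iterate nX w0 (Suc k) \<omega> = W - (mb / L) *\<^sub>R (matrix_inv A *v gX)"
    by (simp add: Let_def W_def gX_def A_def)
  have "F (W - (mb / L) *\<^sub>R (matrix_inv A *v gX)) - F wstar
      \<le> (1 - mu * mb / (L * Lbb)) * (F W - F wstar) + (gX - GF W) \<bullet> (gX - GF W) / (2 * L)"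
    by (rule newton_step_decrease[OF F_grad F_hess loewner_le_scaleR_mat_1_leftD(2)[OF HF_ge]
        loewner_le_scaleR_mat_1_rightD[OF HF_le] mu_pos L_pos wstar_min
        loewner_le_scaleR_mat_1_leftD(1)[OF A_ge] loewner_le_scaleR_mat_1_leftD(2)[OF A_ge] mb_pos
        loewner_le_scaleR_mat_1_rightD[OF A_le]])
      (use mb_pos mb_le_Lbb in linarith)
  then show ?thesis
    by (simp only: step power2_norm_eq_inner flip: W_def gX_def)
qed

lemma expected_gap_step:
  assumes n: "1 \<le> nX k"
  shows "(\<integral>\<^sup>+\<omega>. ennreal (F (iterate nX w0 (Suc k) \<omega>) - F wstar) \<partial>M)
    \<le> ennreal (1 - mu * mb / (L * Lbb)) * (\<integral>\<^sup>+\<omega>. ennreal (F (iterate nX w0 k \<omega>) - F wstar) \<partial>M)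
      + ennreal (v\<^sup>2 / (2 * L * nX k))"
proof -
  define c where "c = mu * mb / (L * Lbb)"
  define W where "W = iterate nX w0 k"
  define err where "err \<omega> = (norm ((1 / real (nX k)) *\<^sub>R (\<Sum>j<nX k. g (Z (True, k, j) \<omega>) (W \<omega>)) - GF (W \<omega>)))\<^sup>2" for \<omega>
  have c: "0 \<le> c" "c \<le> 1"
    using mu_pos mu_le_L mb_pos mb_le_Lbb L_pos
    by (auto simp: c_def divide_le_eq intro: mult_mono)
  have W_meas: "W \<in> borel_measurable M"
    unfolding W_def by (rule iterate_measurable)
  have gap_meas: "(\<lambda>\<omega>. ennreal (F (W \<omega>) - F wstar)) \<in> borel_measurable M"
    using measurable_compose[OF W_meas F_measurable] by measurable
  have "(\<lambda>\<omega>. g (Z (True, k, j) \<omega>) (W \<omega>)) \<in> borel_measurable M" for j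
    by (rule measurable_compose_uncurried[OF g_meas Z_measurable W_meas])
  then have err_meas: "(\<lambda>\<omega>. ennreal (err \<omega>)) \<in> borel_measurable M"
    unfolding err_def using measurable_compose[OF W_meas GF_measurable] by measurable
  have "(\<integral>\<^sup>+\<omega>. ennreal (F (iterate nX w0 (Suc k) \<omega>) - F wstar) \<partial>M)
      \<le> (\<integral>\<^sup>+\<omega>. ennreal (1 - c) * ennreal (F (W \<omega>) - F wstar) + ennreal (1 / (2 * L)) * ennreal (err \<omega>) \<partial>M)"
  proof (rule nn_integral_mono)
    fix \<omega> assume \<omega>: "\<omega> \<in> space M"
    have "F (iterate nX w0 (Suc k) \<omega>) - F wstar \<le> (1 - c) * (F (W \<omega>) - F wstar) + 1 / (2 * L) * err \<omega>"
      using iterate_gap_step[OF \<omega>, of nX w0 k] by (simp add: c_def W_def err_def del: sn_iter.simps)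
    then show "ennreal (F (iterate nX w0 (Suc k) \<omega>) - F wstar)
        \<le> ennreal (1 - c) * ennreal (F (W \<omega>) - F wstar) + ennreal (1 / (2 * L)) * ennreal (err \<omega>)"
      using wstar_min[of "W \<omega>"] c L_pos by (intro ennreal_le_affine_combination) (auto simp: err_def)
  qed
  also have "\<dots> = ennreal (1 - c) * (\<integral>\<^sup>+\<omega>. ennreal (F (W \<omega>) - F wstar) \<partial>M)
      + ennreal (1 / (2 * L)) * (\<integral>\<^sup>+\<omega>. ennreal (err \<omega>) \<partial>M)"
    using gap_meas err_meas by (simp add: nn_integral_add nn_integral_cmult)
  also have "\<dots> \<le> ennreal (1 - c) * (\<integral>\<^sup>+\<omega>. ennreal (F (W \<omega>) - F wstar) \<partial>M)
      + ennreal (1 / (2 * L)) * ennreal (v\<^sup>2 / nX k)"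
    using gradient_sample_error_le[of nX k w0, OF n] unfolding err_def W_def
    by (intro add_left_mono mult_left_mono) auto
  also have "ennreal (1 / (2 * L)) * ennreal (v\<^sup>2 / nX k) = ennreal (v\<^sup>2 / (2 * L * nX k))"
    using L_pos by (simp add: ennreal_mult'[symmetric])
  finally show ?thesis
    by (simp add: c_def W_def del: sn_iter.simps)
qed

end

lemma geometric_bound_of_linear_recursion:
  fixes E :: "nat \<Rightarrow> ennreal"
  assumes E0: "E 0 \<le> ennreal C"
    and step: "\<And>k. E (Suc k) \<le> ennreal (1 - c) * E k + ennreal (a * r ^ k)"
    and c: "0 \<le> c" "c \<le> 1" and C: "0 \<le> C" and a: "0 \<le> a" "a \<le> C * c / 2"
    and r: "0 \<le> r" "r \<le> \<rho>" and \<rho>: "1 - c / 2 \<le> \<rho>"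
  shows "E k \<le> ennreal (C * \<rho> ^ k)"
proof (induction k)
  case 0
  then show ?case using E0 by simp
next
  case (Suc k)
  have "a * r ^ k \<le> C * c / 2 * \<rho> ^ k"
    using a r c C by (intro mult_mono power_mono) auto
  then have "(1 - c) * (C * \<rho> ^ k) + a * r ^ k \<le> (1 - c / 2) * (C * \<rho> ^ k)"
    by (simp add: algebra_simps)
  also have "\<dots> \<le> \<rho> * (C * \<rho> ^ k)"
    using \<rho> c C by (intro mult_right_mono) auto
  also have "\<dots> = C * \<rho> ^ Suc k"
    by simp
  finally have real_step: "(1 - c) * (C * \<rho> ^ k) + a * r ^ k \<le> C * \<rho> ^ Suc k" .
  have "E (Suc k) \<le> ennreal (1 - c) * ennreal (C * \<rho> ^ k) + ennreal (a * r ^ k)"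
    using step[of k] Suc.IH by (meson add_right_mono mult_left_mono order_trans zero_le)
  also have "\<dots> = ennreal ((1 - c) * (C * \<rho> ^ k) + a * r ^ k)"
    using c C a r \<rho> by (simp add: ennreal_mult ennreal_plus)
  also have "\<dots> \<le> ennreal (C * \<rho> ^ Suc k)"
    using real_step by (rule ennreal_leI)
  finally show ?case .
qed

lemma sum_property_of_sum_list_property:
  assumes "\<And>zs. length zs = b \<Longrightarrow> set zs \<subseteq> A \<Longrightarrow> Q (sum_list (map h zs))"
    and "\<And>j. j < b \<Longrightarrow> f j \<in> A"
  shows "Q (\<Sum>j<b. h (f j))"
proof -
  have "sum_list (map h (map f [0..<b])) = (\<Sum>j<b. h (f j))"
    by (simp add: interv_sum_list_conv_sum_set_nat atLeast0LessThan o_def)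
  moreover have "length (map f [0..<b]) = b" "set (map f [0..<b]) \<subseteq> A"
    using assms(2) by auto
  ultimately show ?thesis
    using assms(1) by metis
qed

context subsampled_newton
begin

lemma expected_gap_geometric_decay:
  assumes eta: "1 < \<eta>" and nX: "\<And>k. \<eta> ^ k \<le> nX k"
  shows "(\<integral>\<^sup>+\<omega>. ennreal (F (iterate nX w0 k \<omega>) - F wstar) \<partial>M)
    \<le> ennreal (max (F w0 - F wstar) (v\<^sup>2 * Lbb / (mu * mb))
      * (max (1 - mu * mb / (2 * L * Lbb)) (1 / \<eta>)) ^ k)"
proof -
  define c where "c = mu * mb / (L * Lbb)"
  define C where "C = max (F w0 - F wstar) (v\<^sup>2 * Lbb / (mu * mb))"
  have nX_pos: "1 \<le> nX k" for k
  proof -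
    have "1 \<le> \<eta> ^ k"
      using eta by (simp add: one_le_power)
    then show ?thesis
      using nX[of k] by simp
  qed
  have "ennreal (v\<^sup>2 / (2 * L * nX k)) \<le> ennreal (v\<^sup>2 / (2 * L) * (1 / \<eta>) ^ k)" for k
  proof (rule ennreal_leI)
    have "0 \<le> v\<^sup>2 / (2 * L)"
      using L_pos by simp
    moreover have "0 < real (nX k) * \<eta> ^ k"
      using nX_pos[of k] eta by simp
    ultimately have "v\<^sup>2 / (2 * L) / nX k \<le> v\<^sup>2 / (2 * L) / \<eta> ^ k"
      by (rule divide_left_mono[OF nX])
    then show "v\<^sup>2 / (2 * L * nX k) \<le> v\<^sup>2 / (2 * L) * (1 / \<eta>) ^ k"
      by (simp add: power_one_over)
  qed
  then have step: "(\<integral>\<^sup>+\<omega>. ennreal (F (iterate nX w0 (Suc k) \<omega>) - F wstar) \<partial>M)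
      \<le> ennreal (1 - c) * (\<integral>\<^sup>+\<omega>. ennreal (F (iterate nX w0 k \<omega>) - F wstar) \<partial>M)
        + ennreal (v\<^sup>2 / (2 * L) * (1 / \<eta>) ^ k)" for k
    using expected_gap_step[of nX k w0, OF nX_pos] unfolding c_def by (meson add_left_mono order_trans)
  have c: "0 \<le> c" "c \<le> 1"
    using mu_pos mu_le_L mb_pos mb_le_Lbb L_pos by (auto simp: c_def divide_le_eq intro: mult_mono)
  have "v\<^sup>2 / (2 * L) = v\<^sup>2 * Lbb / (mu * mb) * c / 2"
    using mu_pos mb_pos mb_le_Lbb L_pos by (simp add: c_def field_simps)
  also have "\<dots> \<le> C * c / 2"
    using c by (intro divide_right_mono mult_right_mono) (auto simp: C_def)
  finally have noise: "v\<^sup>2 / (2 * L) \<le> C * c / 2" .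
  show ?thesis
    unfolding C_def[symmetric]
    using eta wstar_min[of w0] c noise L_pos
    by (intro geometric_bound_of_linear_recursion[OF _ step])
      (auto simp: M.emeasure_space_1 C_def c_def)
qed

end

theorem theorem2p1:
  fixes P :: "'z measure"                       \<comment> \<open>distribution of input-output pairs\<close>
    and f :: "'z \<Rightarrow> real^'n \<Rightarrow> real"          \<comment> \<open>loss f(w;x,y), written f z w\<close>
    and g :: "'z \<Rightarrow> real^'n \<Rightarrow> real^'n"      \<comment> \<open>gradient of f z\<close>
    and H :: "'z \<Rightarrow> real^'n \<Rightarrow> real^'n^'n"   \<comment> \<open>Hessian of f z\<close>
    and F :: "real^'n \<Rightarrow> real" and GF :: "real^'n \<Rightarrow> real^'n" and HF :: "real^'n \<Rightarrow> real^'n^'n"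
    and M :: "'w measure" and Z :: "bool \<times> nat \<times> nat \<Rightarrow> 'w \<Rightarrow> 'z"
    and mub Lb :: "nat \<Rightarrow> real" and mu L v \<eta> :: real and b :: nat
    and w0 wstar :: "real^'n"
  assumes P_prob: "prob_space P"
    \<comment> \<open>smooth loss\<close>
    and f_grad: "\<And>z w. (f z has_derivative (\<lambda>h. g z w \<bullet> h)) (at w)"
    and f_hess: "\<And>z w. (g z has_derivative (\<lambda>h. H z w *v h)) (at w)"
    and H_cont: "\<And>z. continuous_on UNIV (H z)"
    and g_meas: "(\<lambda>(z, w). g z w) \<in> borel_measurable (P \<Otimes>\<^sub>M borel)"
    and H_meas: "(\<lambda>(z, w). H z w) \<in> borel_measurable (P \<Otimes>\<^sub>M borel)"
    \<comment> \<open>expected risk and its derivatives\<close>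
    and f_int: "\<And>w. integrable P (\<lambda>z. f z w)"
    and F_def: "\<And>w. F w = (\<integral>z. f z w \<partial>P)"
    and F_grad: "\<And>w. (F has_derivative (\<lambda>h. GF w \<bullet> h)) (at w)"
    and F_hess: "\<And>w. (GF has_derivative (\<lambda>h. HF w *v h)) (at w)"
    and HF_cont: "continuous_on UNIV HF"
    and g_int: "\<And>w. integrable P (\<lambda>z. g z w)"
    and GF_exp: "\<And>w. GF w = (\<integral>z. g z w \<partial>P)"
    and H_int: "\<And>w. integrable P (\<lambda>z. H z w)"
    and HF_exp: "\<And>w. HF w = (\<integral>z. H z w \<partial>P)"
    \<comment> \<open>w* is the minimizer of F\<close>
    and wstar_min: "\<And>w. F wstar \<le> F w"
    \<comment> \<open>Assumption A1\<close>
    and A1_sub: "\<And>\<beta> zs w. \<beta> \<ge> 1 \<Longrightarrow> length zs = \<beta> \<Longrightarrow> set zs \<subseteq> space P \<Longrightarrow>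
        loewner_le (mub \<beta> *\<^sub>R mat 1) ((1 / real \<beta>) *\<^sub>R sum_list (map (\<lambda>z. H z w) zs)) \<and>
        loewner_le ((1 / real \<beta>) *\<^sub>R sum_list (map (\<lambda>z. H z w) zs)) (Lb \<beta> *\<^sub>R mat 1)"
    and A1_const: "\<And>\<beta>. \<beta> \<ge> 1 \<Longrightarrow> 0 < mub \<beta> \<and> mub \<beta> \<le> Lb \<beta>"
    and A1_unif: "\<exists>mubar Lbar. 0 < mubar \<and> (\<forall>\<beta>\<ge>1. mubar \<le> mub \<beta> \<and> Lb \<beta> \<le> Lbar)"
    and A1_F: "\<And>w. loewner_le (mu *\<^sub>R mat 1) (HF w) \<and> loewner_le (HF w) (L *\<^sub>R mat 1)"
    and mu_pos: "0 < mu" and mu_le_L: "mu \<le> L"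
    \<comment> \<open>Assumption A2\<close>
    and g_sq_int: "\<And>w. integrable P (\<lambda>z. (norm (g z w))\<^sup>2)"
    and A2: "\<And>w. tr_cov P (\<lambda>z. g z w) \<le> v\<^sup>2"
    \<comment> \<open>independent sample points drawn from P\<close>
    and M_prob: "prob_space M"
    and Z_indep: "prob_space.indep_vars M (\<lambda>_. P) Z UNIV"
    and Z_distr: "\<And>i. distr M P (Z i) = P"
    \<comment> \<open>sample sizes and steplength\<close>
    and eta_gt: "\<eta> > 1"
    and b_ge: "b \<ge> 1"
  shows "\<forall>k. (\<integral>\<^sup>+ \<omega>. ennreal (F (sn_iter g H Z (\<lambda>k. nat \<lceil>\<eta> ^ k\<rceil>) b (mub b / L) w0 k \<omega>) - F wstar) \<partial>M)
           \<le> ennreal (max (F w0 - F wstar) (v\<^sup>2 * Lb b / (mu * mub b))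
                      * (max (1 - mu * mub b / (2 * L * Lb b)) (1 / \<eta>)) ^ k)"
proof -
  have mb: "0 < mub b" "mub b \<le> Lb b"
    using A1_const[OF b_ge] by auto
  interpret subsampled_newton M P Z g H F GF HF b "mub b" "Lb b" mu L v wstar
  proof (intro subsampled_newton.intro subsampled_newton_axioms.intro; (fact P_prob M_prob Z_indep
        Z_distr g_meas H_meas g_int g_sq_int GF_exp A2 F_grad F_hess mu_pos mu_le_L wstar_min mb)?)
    show "loewner_le (mu *\<^sub>R mat 1) (HF w)" "loewner_le (HF w) (L *\<^sub>R mat 1)" for w
      using A1_F by auto
    fix f :: "nat \<Rightarrow> 'z" and w assume "\<And>j. j < b \<Longrightarrow> f j \<in> space P"
    from sum_property_of_sum_list_property[where Q = "\<lambda>X. loewner_le (mub b *\<^sub>R mat 1) ((1 / real b) *\<^sub>R X)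
        \<and> loewner_le ((1 / real b) *\<^sub>R X) (Lb b *\<^sub>R mat 1)" and h = "\<lambda>z. H z w", OF A1_sub[OF b_ge] this]
    show "loewner_le (mub b *\<^sub>R mat 1) ((1 / real b) *\<^sub>R (\<Sum>j<b. H (f j) w))"
      and "loewner_le ((1 / real b) *\<^sub>R (\<Sum>j<b. H (f j) w)) (Lb b *\<^sub>R mat 1)"
      by auto
  qed
  show ?thesis
    using expected_gap_geometric_decay[OF eta_gt] by (simp add: real_nat_ceiling_ge)
qed

end
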